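(* Let $n$ be a positive integer that is a multiple of $3$. If the Aztec diamond $\operatorname{AD}(n)$ has a cover by L-trominoes, then $\operatorname{AD}(n+2)$ has a cover by L-trominoes.
   Context: A cell is a unit square $[i,i+1]\times[j,j+1]$ with $i,j\in\mathbb{Z}$. An L-tromino is a set of three cells equal to a $2\times 2$ block of cells with one cell removed. A cover of a region $R$ (a finite edge-connected set of cells) is a set of pairwise disjoint L-trominoes contained in $R$ whose union is $R$. The Aztec diamond $\operatorname{AD}(n)$ is the union of the cells $[a,a+1]\times[b,b+1]$, $a,b\in\mathbb{Z}$, lying completely inside $\{(x,y): |x|+|y|\le n+1\}$. *)

theory Defs
  imports Main
begin

text \<open>A cell [i,i+1] x [j,j+1] is represented by its lower-left corner (i,j).\<close>
type_synonym cell = "int \<times> int"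

definition block2 :: "int \<Rightarrow> int \<Rightarrow> cell set" where
  "block2 i j = {(i,j), (i+1,j), (i,j+1), (i+1,j+1)}"

definition is_L_tromino :: "cell set \<Rightarrow> bool" where
  "is_L_tromino T \<longleftrightarrow> (\<exists>i j c. c \<in> block2 i j \<and> T = block2 i j - {c})"

definition is_cover :: "cell set \<Rightarrow> cell set set \<Rightarrow> bool" where
  "is_cover R C \<longleftrightarrow>
     (\<forall>T\<in>C. is_L_tromino T \<and> T \<subseteq> R) \<and>
     (\<forall>T\<in>C. \<forall>T'\<in>C. T \<noteq> T' \<longrightarrow> T \<inter> T' = {}) \<and>
     \<Union>C = R"

text \<open>Aztec diamond: cells lying completely inside |x|+|y| <= n+1, i.e. all four
  corners of the (convex) unit square satisfy the inequality.\<close>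
definition AD :: "nat \<Rightarrow> cell set" where
  "AD n = {(a,b). \<forall>x\<in>{a, a+1}. \<forall>y\<in>{b, b+1}. \<bar>x\<bar> + \<bar>y\<bar> \<le> int n + 1}"

end

theory Submission
  imports Defs
begin

text \<open>The cells of AD(n+2) outside AD(n) form a ring made of four mirror images of a
  staircase of 2n + 3 cells in the first quadrant. A zigzag path runs through the staircase
  such that any three consecutive cells form an L-tromino; when 3 divides n, the path
  splits into consecutive triples, which tile the staircase and hence the ring.\<close>

lemma is_cover_subset: "is_cover R C \<Longrightarrow> T \<in> C \<Longrightarrow> T \<subseteq> R"
  by (simp add: is_cover_def)

lemma is_cover_disjoint:
  "is_cover R C \<Longrightarrow> T \<in> C \<Longrightarrow> T' \<in> C \<Longrightarrow> T \<noteq> T' \<Longrightarrow> T \<inter> T' = {}"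
  by (simp add: is_cover_def)

lemma is_cover_Un:
  assumes C: "is_cover A C" and D: "is_cover B D" and AB: "A \<inter> B = {}"
  shows "is_cover (A \<union> B) (C \<union> D)"
proof -
  have CD: "T \<inter> T' = {}" if "T \<in> C" "T' \<in> D" for T T'
    using is_cover_subset[OF C] is_cover_subset[OF D] AB that by blast
  show ?thesis unfolding is_cover_def
  proof (intro conjI ballI impI)
    fix T T' assume "T \<in> C \<union> D" "T' \<in> C \<union> D" "T \<noteq> T'"
    then show "T \<inter> T' = {}"
      using is_cover_disjoint[OF C] is_cover_disjoint[OF D] CD[of T T'] CD[of T' T]
      by (elim UnE) (metis Int_commute)+
  qed (use C D in \<open>auto simp: is_cover_def\<close>)
qed

lemma is_L_tromino_image:
  assumes "inj g" and blocks: "\<And>i j. \<exists>i' j'. g ` block2 i j = block2 i' j'"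
    and "is_L_tromino T"
  shows "is_L_tromino (g ` T)"
proof -
  obtain i j c where c: "c \<in> block2 i j" and T: "T = block2 i j - {c}"
    using \<open>is_L_tromino T\<close> unfolding is_L_tromino_def by blast
  obtain i' j' where B: "g ` block2 i j = block2 i' j'"
    using blocks by blast
  have "g ` T = block2 i' j' - {g c}"
    using \<open>inj g\<close> B by (simp add: T image_set_diff)
  moreover have "g c \<in> block2 i' j'"
    using c B by blast
  ultimately show ?thesis
    unfolding is_L_tromino_def by blast
qed

lemma is_cover_image:
  assumes "inj g" and blocks: "\<And>i j. \<exists>i' j'. g ` block2 i j = block2 i' j'"
    and C: "is_cover R C"
  shows "is_cover (g ` R) ((`) g ` C)"
  unfolding is_cover_def
proof (intro conjI ballI impI)
  fix T assume "T \<in> (`) g ` C"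
  then obtain S where "S \<in> C" "T = g ` S" by blast
  then show "is_L_tromino T"
    using is_L_tromino_image[OF \<open>inj g\<close> blocks] C unfolding is_cover_def by blast
next
  fix T assume "T \<in> (`) g ` C"
  then show "T \<subseteq> g ` R"
    using is_cover_subset[OF C] by blast
next
  fix T T' assume "T \<in> (`) g ` C" "T' \<in> (`) g ` C" "T \<noteq> T'"
  then obtain S S' where "S \<in> C" "S' \<in> C" "T = g ` S" "T' = g ` S'" "S \<noteq> S'"
    by blast
  then show "T \<inter> T' = {}"
    using is_cover_disjoint[OF C] \<open>inj g\<close> by (simp add: image_Int[symmetric])
next
  show "\<Union> ((`) g ` C) = g ` R"
    using C unfolding is_cover_def by blast
qed

text \<open>Reflections in the coordinate axes; cells are named by their lower-left corner,
  hence the shift by -1.\<close>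

definition flip_x :: "cell \<Rightarrow> cell" where
  "flip_x = (\<lambda>(a, b). (-1 - a, b))"

definition flip_y :: "cell \<Rightarrow> cell" where
  "flip_y = (\<lambda>(a, b). (a, -1 - b))"

lemma flip_x_simp [simp]: "flip_x (a, b) = (-1 - a, b)"
  by (simp add: flip_x_def)

lemma flip_y_simp [simp]: "flip_y (a, b) = (a, -1 - b)"
  by (simp add: flip_y_def)

lemma flip_x_flip_x [simp]: "flip_x (flip_x c) = c"
  by (cases c) simp

lemma flip_y_flip_y [simp]: "flip_y (flip_y c) = c"
  by (cases c) simp

lemma inj_flip_x: "inj flip_x"
  by (metis flip_x_flip_x injI)

lemma inj_flip_y: "inj flip_y"
  by (metis flip_y_flip_y injI)

lemma mem_flip_x_image: "c \<in> flip_x ` S \<longleftrightarrow> flip_x c \<in> S"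
  by (metis flip_x_flip_x image_iff)

lemma mem_flip_y_image: "c \<in> flip_y ` S \<longleftrightarrow> flip_y c \<in> S"
  by (metis flip_y_flip_y image_iff)

lemma flip_x_block2: "flip_x ` block2 i j = block2 (-2 - i) j"
  by (auto simp: block2_def image_iff)

lemma flip_y_block2: "flip_y ` block2 i j = block2 i (-2 - j)"
  by (auto simp: block2_def image_iff)

lemma is_cover_flip_x: "is_cover R C \<Longrightarrow> is_cover (flip_x ` R) ((`) flip_x ` C)"
  using is_cover_image[OF inj_flip_x] flip_x_block2 by blast

lemma is_cover_flip_y: "is_cover R C \<Longrightarrow> is_cover (flip_y ` R) ((`) flip_y ` C)"
  using is_cover_image[OF inj_flip_y] flip_y_block2 by blast

definition quadrant_copies :: "cell set \<Rightarrow> cell set" where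
  "quadrant_copies S = S \<union> flip_x ` S \<union> flip_y ` S \<union> flip_x ` flip_y ` S"

lemma mem_quadrant_copies:
  "c \<in> quadrant_copies S \<longleftrightarrow>
     c \<in> S \<or> flip_x c \<in> S \<or> flip_y c \<in> S \<or> flip_y (flip_x c) \<in> S"
  by (simp add: quadrant_copies_def mem_flip_x_image mem_flip_y_image)

lemma is_cover_quadrant_copies:
  assumes S: "S \<subseteq> {(a, b). 0 \<le> a \<and> 0 \<le> b}" and C: "is_cover S C"
  shows "\<exists>D. is_cover (quadrant_copies S) D"
proof -
  have sign: "0 \<le> a \<and> 0 \<le> b" if "(a, b) \<in> S" for a b
    using S that by blast
  have "S \<inter> flip_x ` S = {}"
    and "(S \<union> flip_x ` S) \<inter> flip_y ` S = {}"
    and "(S \<union> flip_x ` S \<union> flip_y ` S) \<inter> flip_x ` flip_y ` S = {}"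
    by (auto simp: disjoint_iff mem_flip_x_image mem_flip_y_image dest!: sign)
  then have "is_cover (quadrant_copies S)
      (C \<union> (`) flip_x ` C \<union> (`) flip_y ` C \<union> (`) flip_x ` (`) flip_y ` C)"
    unfolding quadrant_copies_def
    by (intro is_cover_Un is_cover_flip_x is_cover_flip_y C)
  then show ?thesis ..
qed

lemma is_cover_path_triples:
  fixes p :: "int \<Rightarrow> cell"
  assumes "inj p" and L: "\<And>t. is_L_tromino (p ` {t, t + 1, t + 2})"
  shows "is_cover (p ` {0..<3 * m}) ((\<lambda>j. p ` {3 * j, 3 * j + 1, 3 * j + 2}) ` {0..<m})"
proof -
  define triple :: "int \<Rightarrow> int set" where "triple j = {3 * j, 3 * j + 1, 3 * j + 2}" for j
  have mem_triple: "t \<in> triple j \<longleftrightarrow> t div 3 = j" for t j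
    unfolding triple_def by auto
  have "(\<Union>j\<in>{0..<m}. triple j) = {0..<3 * m}"
    by (auto simp: mem_triple)
  then have union: "\<Union> ((\<lambda>j. p ` triple j) ` {0..<m}) = p ` {0..<3 * m}"
    by blast
  have disjoint: "p ` triple i \<inter> p ` triple j = {}" if "p ` triple i \<noteq> p ` triple j" for i j
  proof -
    have "triple i \<inter> triple j = {}"
      using that by (auto simp: mem_triple)
    then show ?thesis
      using \<open>inj p\<close> by (simp add: image_Int[symmetric])
  qed
  show ?thesis
    unfolding is_cover_def triple_def[symmetric]
  proof (intro conjI ballI impI)
    fix T assume "T \<in> (\<lambda>j. p ` triple j) ` {0..<m}"
    then show "is_L_tromino T" and "T \<subseteq> p ` {0..<3 * m}"
      using L union by (auto simp: triple_def)
  qed (use disjoint union in auto)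
qed

definition staircase :: "nat \<Rightarrow> cell set" where
  "staircase n = {(a, b). 0 \<le> a \<and> 0 \<le> b \<and> (a + b = int n \<or> a + b = int n + 1)}"

text \<open>The path zigzags through the staircase: even steps lie on the outer diagonal
  a + b = n + 1, odd steps on the inner one.\<close>

definition staircase_path :: "nat \<Rightarrow> int \<Rightarrow> cell" where
  "staircase_path n t = (t div 2, int n + 1 - (t + 1) div 2)"

lemma staircase_path_even: "staircase_path n (2 * s) = (s, int n + 1 - s)"
  by (simp add: staircase_path_def)

lemma staircase_path_odd: "staircase_path n (2 * s + 1) = (s, int n - s)"
  by (simp add: staircase_path_def)

lemma inj_staircase_path: "inj (staircase_path n)"
  by (rule injI) (simp add: staircase_path_def, presburger)

lemma staircase_eq_image: "staircase n = staircase_path n ` {0..<2 * int n + 3}"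
proof
  show "staircase n \<subseteq> staircase_path n ` {0..<2 * int n + 3}"
  proof
    fix c assume "c \<in> staircase n"
    then obtain a b where c: "c = (a, b)" "0 \<le> a" "0 \<le> b" "a + b = int n \<or> a + b = int n + 1"
      unfolding staircase_def by blast
    then have "c = staircase_path n (2 * a) \<and> 2 * a \<in> {0..<2 * int n + 3}
        \<or> c = staircase_path n (2 * a + 1) \<and> 2 * a + 1 \<in> {0..<2 * int n + 3}"
      by (auto simp: staircase_path_even staircase_path_odd)
    then show "c \<in> staircase_path n ` {0..<2 * int n + 3}"
      by blast
  qed
  show "staircase_path n ` {0..<2 * int n + 3} \<subseteq> staircase n"
    unfolding staircase_def staircase_path_def by (auto; presburger)
qed

lemma is_L_tromino_staircase_path: "is_L_tromino (staircase_path n ` {t, t + 1, t + 2})"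
proof -
  obtain s where "t = 2 * s \<or> t = 2 * s + 1"
    by (metis dvd_mult_div_cancel odd_two_times_div_two_succ)
  then obtain i j c where "staircase_path n ` {t, t + 1, t + 2} = block2 i j - {c}"
    and "c \<in> block2 i j"
  proof
    assume t: "t = 2 * s"
    have "{t, t + 1, t + 2} = {2 * s, 2 * s + 1, 2 * (s + 1)}"
      using t by auto
    then have "staircase_path n ` {t, t + 1, t + 2}
        = block2 s (int n - s) - {(s + 1, int n + 1 - s)}"
      by (auto simp only: image_insert image_empty staircase_path_even staircase_path_odd)
        (auto simp: block2_def)
    then show ?thesis
      by (rule that) (simp add: block2_def)
  next
    assume t: "t = 2 * s + 1"
    have "{t, t + 1, t + 2} = {2 * s + 1, 2 * (s + 1), 2 * (s + 1) + 1}"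
      using t by auto
    then have "staircase_path n ` {t, t + 1, t + 2}
        = block2 s (int n - s - 1) - {(s, int n - s - 1)}"
      by (auto simp only: image_insert image_empty staircase_path_even staircase_path_odd)
        (auto simp: block2_def)
    then show ?thesis
      by (rule that) (simp add: block2_def)
  qed
  then show ?thesis
    unfolding is_L_tromino_def by blast
qed

lemma is_cover_staircase:
  assumes "3 dvd n"
  shows "\<exists>C. is_cover (staircase n) C"
proof -
  obtain k where "n = 3 * k"
    using assms by blast
  then have "2 * int n + 3 = 3 * (2 * int k + 1)"
    by simp
  then show ?thesis
    using is_cover_path_triples[OF inj_staircase_path is_L_tromino_staircase_path, of n "2 * int k + 1"]
    by (auto simp: staircase_eq_image)
qed

text \<open>The number of whole columns between column a and the vertical axis; it is invariant
  under the reflection a \<mapsto> -1 - a.\<close>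

definition layer :: "int \<Rightarrow> int" where
  "layer a = (if 0 \<le> a then a else -1 - a)"

lemma mem_AD_iff: "(a, b) \<in> AD n \<longleftrightarrow> layer a + layer b \<le> int n - 1"
  unfolding AD_def layer_def by (cases "0 \<le> a"; cases "0 \<le> b") auto

lemma mem_quadrant_copies_staircase:
  "(a, b) \<in> quadrant_copies (staircase n) \<longleftrightarrow> layer a + layer b \<in> {int n, int n + 1}"
  unfolding mem_quadrant_copies staircase_def layer_def
  by (cases "0 \<le> a"; cases "0 \<le> b") auto

lemma AD_add_two: "AD (n + 2) = AD n \<union> quadrant_copies (staircase n)"
  by (auto simp: mem_AD_iff mem_quadrant_copies_staircase)

lemma AD_disjoint_quadrant_copies_staircase: "AD n \<inter> quadrant_copies (staircase n) = {}"
  by (auto simp: mem_AD_iff mem_quadrant_copies_staircase)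

theorem corollary2:
  fixes n :: nat
  assumes "n > 0" and "3 dvd n"
    and "\<exists>C. is_cover (AD n) C"
  shows "\<exists>C. is_cover (AD (n + 2)) C"
proof -
  obtain C where C: "is_cover (AD n) C"
    using assms(3) by blast
  obtain S where "is_cover (staircase n) S"
    using is_cover_staircase[OF assms(2)] by blast
  moreover have "staircase n \<subseteq> {(a, b). 0 \<le> a \<and> 0 \<le> b}"
    by (auto simp: staircase_def)
  ultimately obtain D where D: "is_cover (quadrant_copies (staircase n)) D"
    using is_cover_quadrant_copies by blast
  have "is_cover (AD (n + 2)) (C \<union> D)"
    unfolding AD_add_two
    by (rule is_cover_Un[OF C D AD_disjoint_quadrant_copies_staircase])
  then show ?thesis ..
qed

end
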